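(* Let $m\ge 1$ be an integer and let $(h(n))_{n\ge 1}$ be the non-decreasing sequence of non-negative integers with $h(1)=0$ in which, for each integer $k\ge 0$, the value $k$ appears exactly $mk+1$ times. For $k\ge 0$ let $T^{\star}_k = 1 + m\binom{k}{2} + k$ (so $h(n)=k$ if and only if $T^{\star}_k\le n<T^{\star}_{k+1}$), and let $a_{\mathrm{sol}}(n) = n - h(n)$ for $n\ge1$. Then: (1) For every $k\ge 0$: $h\big(a_{\mathrm{sol}}^{(j)}(T^{\star}_{k+1}-1)\big) = k$ for all $0\le j\le m$, and $a_{\mathrm{sol}}^{(m)}(T^{\star}_{k+1}-1) = T^{\star}_k$. (2) For every $k\ge 1$: $h\big(a_{\mathrm{sol}}^{(j)}(T^{\star}_{k})\big) = k-1$ for all $1\le j\le m$, and $a_{\mathrm{sol}}^{(m)}(T^{\star}_{k}) = T^{\star}_{k-1}$.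
   Context: Iterates are defined by $f^{(0)}(n)=n$ and $f^{(j+1)}(n)=f(f^{(j)}(n))$. *)

theory Defs
  imports Main
begin

definition Tstar :: "nat \<Rightarrow> nat \<Rightarrow> nat" where
  "Tstar m k = 1 + m * (k choose 2) + k"

end

theory Submission
  imports Defs
begin

(* A nondecreasing h taking each value k exactly m k + 1 times is the step function equal to k
   on the block [T k, T (k + 1)) = [T k, T k + m k], where T = Tstar m.  On that block
   a_sol n = n - h n moves down by exactly k, so m steps lead from the last element T k + m k
   of the block to its first element T k without leaving it.  From T (k + 1) the first step
   lands at T (k + 1) - (k + 1) = T k + (m - 1) k, and m - 1 further steps again reach T k. *)

lemma Tstar_0 [simp]: "Tstar m 0 = 1"
  by (simp add: Tstar_def)

lemma Tstar_Suc: "Tstar m (Suc k) = Tstar m k + (m * k + 1)"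
  by (simp add: Tstar_def numeral_2_eq_2 algebra_simps)

context
  fixes h c T :: "nat \<Rightarrow> nat"
  assumes h_mono: "\<And>n. 1 \<le> n \<Longrightarrow> h n \<le> h (Suc n)"
    and count: "\<And>k. card {n. 1 \<le> n \<and> h n = k} = c k"
    and count_pos: "\<And>k. c k > 0"
    and T_0: "T 0 = 1"
    and T_Suc: "\<And>k. T (Suc k) = T k + c k"
begin

lemma one_le_block_start: "1 \<le> T k"
  by (induction k) (simp_all add: T_0 T_Suc)

lemma sublevel_set_eq_initial_segment: "{n. 1 \<le> n \<and> h n < k} = {1..<T k}"
proof (induction k)
  case 0
  then show ?case by (simp add: T_0)
next
  case (Suc k)
  define S where "S = {n. 1 \<le> n \<and> h n = k}"
  have "card S > 0"
    using count[of k] count_pos[of k] by (simp add: S_def)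
  then have "finite S" "S \<noteq> {}"
    by (simp_all add: card_gt_0_iff)
  define M where "M = Max S"
  have M: "M \<in> S"
    using \<open>finite S\<close> \<open>S \<noteq> {}\<close> by (simp add: M_def)
  have ge_T: "T k \<le> n" if "n \<in> S" for n
  proof -
    have "n \<notin> {n. 1 \<le> n \<and> h n < k}"
      using that by (simp add: S_def)
    then have "n \<notin> {1..<T k}"
      by (simp only: Suc.IH not_False_eq_True)
    with that show ?thesis
      by (simp add: S_def)
  qed
  have "S = {T k..M}"
  proof
    show "S \<subseteq> {T k..M}"
      using ge_T \<open>finite S\<close> by (auto simp: M_def)
  next
    show "{T k..M} \<subseteq> S"
    proof
      fix n assume n: "n \<in> {T k..M}"
      with one_le_block_start[of k] have "1 \<le> n" by simp
      moreover have "n \<notin> {1..<T k}"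
        using n by simp
      then have "n \<notin> {n. 1 \<le> n \<and> h n < k}"
        by (simp only: Suc.IH not_False_eq_True)
      ultimately have "k \<le> h n"
        by simp
      moreover have "h n \<le> h M"
        by (rule lift_Suc_mono_le_ivl[of "{1..}"]) (use h_mono \<open>1 \<le> n\<close> n in auto)
      ultimately show "n \<in> S"
        using M \<open>1 \<le> n\<close> by (simp add: S_def)
    qed
  qed
  moreover have "card S = c k"
    using count[of k] by (simp add: S_def)
  ultimately have "T (Suc k) = Suc M"
    using ge_T[OF M] by (simp add: T_Suc)
  with \<open>S = {T k..M}\<close> have S_block: "S = {T k..<T (Suc k)}"
    by (simp add: atLeastLessThanSuc_atLeastAtMost)
  have "{n. 1 \<le> n \<and> h n < Suc k} = {n. 1 \<le> n \<and> h n < k} \<union> S"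
    by (auto simp: S_def)
  also have "\<dots> = {1..<T k} \<union> {T k..<T (Suc k)}"
    by (simp only: Suc.IH S_block)
  also have "\<dots> = {1..<T (Suc k)}"
    by (rule ivl_disj_un_two(3)) (use one_le_block_start[of k] in \<open>simp_all add: T_Suc\<close>)
  finally show ?case .
qed

lemma eq_on_block:
  assumes "T k \<le> n" "n < T (Suc k)"
  shows "h n = k"
proof -
  have "n \<in> {1..<T (Suc k)}" "n \<notin> {1..<T k}"
    using assms one_le_block_start[of k] by simp_all
  then have "n \<in> {n. 1 \<le> n \<and> h n < Suc k}" "n \<notin> {n. 1 \<le> n \<and> h n < k}"
    by (simp_all only: sublevel_set_eq_initial_segment not_False_eq_True)
  then show ?thesis
    by simp
qed

end

lemma funpow_sub_on_constant_block:
  fixes h :: "nat \<Rightarrow> nat"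
  assumes const: "\<And>n. a \<le> n \<Longrightarrow> n \<le> a + i * k \<Longrightarrow> h n = k" and "j \<le> i"
  shows "((\<lambda>n. n - h n) ^^ j) (a + i * k) = a + (i - j) * k"
  using \<open>j \<le> i\<close>
proof (induction j)
  case 0
  show ?case by simp
next
  case (Suc j)
  have "h (a + (i - j) * k) = k"
    by (rule const) (simp_all add: mult_le_mono1)
  moreover have "i - j = Suc (i - Suc j)"
    using Suc.prems by simp
  ultimately show ?case
    using Suc by simp
qed

context
  fixes m :: nat and h :: "nat \<Rightarrow> nat"
  assumes h_mono: "\<And>n. 1 \<le> n \<Longrightarrow> h n \<le> h (Suc n)"
    and count: "\<And>k. card {n. 1 \<le> n \<and> h n = k} = m * k + 1"
begin

lemma eq_on_Tstar_block:
  assumes "Tstar m k \<le> n" "n \<le> Tstar m k + m * k"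
  shows "h n = k"
  using eq_on_block[OF h_mono count _ Tstar_0 Tstar_Suc] assms by (simp add: Tstar_Suc)

lemma eq_at_Tstar_block_point: "h (Tstar m k + (m - j) * k) = k"
  by (rule eq_on_Tstar_block) (simp_all add: mult_le_mono1)

lemma funpow_sub_from_Tstar_block_point:
  assumes "i \<le> m" "j \<le> i"
  shows "((\<lambda>n. n - h n) ^^ j) (Tstar m k + i * k) = Tstar m k + (i - j) * k"
proof (rule funpow_sub_on_constant_block[OF _ \<open>j \<le> i\<close>])
  fix n assume "Tstar m k \<le> n" "n \<le> Tstar m k + i * k"
  then show "h n = k"
    using eq_on_Tstar_block[of k n] mult_le_mono1[OF \<open>i \<le> m\<close>, of k] by linarith
qed

lemma funpow_sub_from_Tstar_Suc:
  assumes "1 \<le> j" "j \<le> m"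
  shows "((\<lambda>n. n - h n) ^^ j) (Tstar m (Suc k)) = Tstar m k + (m - j) * k"
proof -
  let ?a = "\<lambda>n. n - h n"
  have "?a (Tstar m (Suc k)) = Tstar m k + (m - 1) * k"
    using eq_on_Tstar_block[of "Suc k" "Tstar m (Suc k)"] assms
    by (simp add: Tstar_Suc algebra_simps le_add_diff_inverse)
  then have "(?a ^^ j) (Tstar m (Suc k)) = (?a ^^ (j - 1)) (Tstar m k + (m - 1) * k)"
    using \<open>1 \<le> j\<close> by (metis Suc_diff_le diff_Suc_1 funpow_Suc_right comp_apply)
  then show ?thesis
    using funpow_sub_from_Tstar_block_point[of "m - 1" "j - 1" k] assms by simp
qed

end

theorem mainTheorem3:
  fixes m :: nat and h :: "nat \<Rightarrow> nat"
  assumes m: "m \<ge> 1"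
    and h1: "h 1 = 0"
    and hmono: "\<And>n. n \<ge> 1 \<Longrightarrow> h n \<le> h (Suc n)"
    and hcount: "\<And>k. card {n. n \<ge> 1 \<and> h n = k} = m * k + 1"
  defines "asol \<equiv> (\<lambda>n. n - h n)"
  shows "(\<forall>k. (\<forall>j\<le>m. h ((asol ^^ j) (Tstar m (k+1) - 1)) = k)
              \<and> (asol ^^ m) (Tstar m (k+1) - 1) = Tstar m k)
       \<and> (\<forall>k\<ge>1. (\<forall>j. 1 \<le> j \<and> j \<le> m \<longrightarrow> h ((asol ^^ j) (Tstar m k)) = k - 1)
              \<and> (asol ^^ m) (Tstar m k) = Tstar m (k - 1))"
proof -
  note level = eq_at_Tstar_block_point[OF hmono hcount]
  have from_block_end: "(asol ^^ j) (Tstar m (k + 1) - 1) = Tstar m k + (m - j) * k"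
    if "j \<le> m" for j k
    using funpow_sub_from_Tstar_block_point[OF hmono hcount order.refl that, of k]
    by (simp add: asol_def Tstar_Suc)
  note from_next_block_start = funpow_sub_from_Tstar_Suc[OF hmono hcount, folded asol_def]
  show ?thesis
  proof (intro conjI allI impI)
    fix k j :: nat assume "j \<le> m"
    then show "h ((asol ^^ j) (Tstar m (k + 1) - 1)) = k"
      using from_block_end[of j k] level by simp
  next
    fix k :: nat
    show "(asol ^^ m) (Tstar m (k + 1) - 1) = Tstar m k"
      using from_block_end[of m k] by simp
  next
    fix k j :: nat assume "1 \<le> k" "1 \<le> j \<and> j \<le> m"
    then show "h ((asol ^^ j) (Tstar m k)) = k - 1"
      using from_next_block_start[of j "k - 1"] level by simp
  next
    fix k :: nat assume "1 \<le> k"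
    then show "(asol ^^ m) (Tstar m k) = Tstar m (k - 1)"
      using from_next_block_start[of m "k - 1"] m by simp
  qed
qed

end
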